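(* Let $\{(X_m,d_m,f_m)\}_{m\in\mathbb{N}}$ be a sequence of dynamical systems with each metric $d_m$ bounded by 1, and let $g_m:X_{m+1}\to X_m$ be uniformly continuous bonding maps with $f_m\circ g_m=g_m\circ f_{m+1}$ for all $m$. Suppose the inverse system $(g_m,X_m)$ satisfies the Mittag-Leffler Condition. (i) If every $(X_m,d_m,f_m)$ has the shadowing property, then the inverse limit dynamical system $(\varprojlim(g_m,X_m),d_\Pi,(f_m)^* )$ has the shadowing property. (ii) If every $(X_m,d_m,f_m)$ has the finite shadowing property, then $(\varprojlim(g_m,X_m),d_\Pi,(f_m)^* )$ has the finite shadowing property.
   Context: A dynamical system $(X,d,f)$ is a separable metric space with a continuous self-map. $\varprojlim(g_m,X_m)=\{(x_m)\in\prod_mX_m: x_m=g_m(x_{m+1})\ \forall m\}$ with metric $d_\Pi((x_m),(y_m))=\max_m d_m(x_m,y_m)/(m+1)$, and $(f_m)^*$ is the restriction of the product map $(x_m)\mapsto(f_m(x_m))$. The Mittag-Leffler Condition: for every $N$ there is $k>N$ with $g_N\circ\cdots\circ g_k(X_{k+1})=g_N\circ\cdots\circ g_i(X_{i+1})$ for all $i\ge k$. A $\delta$-pseudo-orbit of $f$ is a (finite or infinite) sequence $(x_n)$ with $d(f(x_n),x_{n+1})<\delta$; $x$ $\varepsilon$-shadows it if $d(f^n(x),x_n)<\varepsilon$ for all indices. Finite shadowing property: for every $\varepsilon>0$ there is $\delta>0$ such that every finite $\delta$-pseudo-orbit is $\varepsilon$-shadowed by some point; shadowing property: same for infinite pseudo-orbits.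 *)

theory Defs
  imports "HOL-Analysis.Analysis"
begin

definition dyn_sys :: "'a metric \<Rightarrow> ('a \<Rightarrow> 'a) \<Rightarrow> bool" where
  "dyn_sys X f \<longleftrightarrow> separable_space (mtopology_of X) \<and>
     continuous_map (mtopology_of X) (mtopology_of X) f"

definition finite_shadowing :: "'a set \<Rightarrow> ('a \<Rightarrow> 'a \<Rightarrow> real) \<Rightarrow> ('a \<Rightarrow> 'a) \<Rightarrow> bool" where
  "finite_shadowing S d f \<longleftrightarrow>
    (\<forall>\<epsilon>>0. \<exists>\<delta>>0. \<forall>(n::nat) (xs::nat \<Rightarrow> 'a).
       (\<forall>i\<le>n. xs i \<in> S) \<and> (\<forall>i<n. d (f (xs i)) (xs (Suc i)) < \<delta>) \<longrightarrow>
       (\<exists>x\<in>S. \<forall>i\<le>n. d ((f ^^ i) x) (xs i) < \<epsilon>))"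

definition shadowing :: "'a set \<Rightarrow> ('a \<Rightarrow> 'a \<Rightarrow> real) \<Rightarrow> ('a \<Rightarrow> 'a) \<Rightarrow> bool" where
  "shadowing S d f \<longleftrightarrow>
    (\<forall>\<epsilon>>0. \<exists>\<delta>>0. \<forall>xs::nat \<Rightarrow> 'a.
       (\<forall>i. xs i \<in> S) \<and> (\<forall>i. d (f (xs i)) (xs (Suc i)) < \<delta>) \<longrightarrow>
       (\<exists>x\<in>S. \<forall>i. d ((f ^^ i) x) (xs i) < \<epsilon>))"

text \<open>bond g N k = g_N o g_(N+1) o ... o g_(N+k-1), a map X_(N+k) -> X_N.\<close>
fun bond :: "(nat \<Rightarrow> 'a \<Rightarrow> 'a) \<Rightarrow> nat \<Rightarrow> nat \<Rightarrow> 'a \<Rightarrow> 'a" where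
  "bond g N 0 = id"
| "bond g N (Suc k) = bond g N k \<circ> g (N + k)"

text \<open>Mittag-Leffler: for every N there is k > N with
  g_N o ... o g_k (X_(k+1)) = g_N o ... o g_i (X_(i+1)) for all i >= k.\<close>
definition mittag_leffler :: "(nat \<Rightarrow> 'a metric) \<Rightarrow> (nat \<Rightarrow> 'a \<Rightarrow> 'a) \<Rightarrow> bool" where
  "mittag_leffler X g \<longleftrightarrow>
    (\<forall>N. \<exists>k>N. \<forall>i\<ge>k.
       bond g N (Suc k - N) ` mspace (X (Suc k)) = bond g N (Suc i - N) ` mspace (X (Suc i)))"

definition inv_lim :: "(nat \<Rightarrow> 'a metric) \<Rightarrow> (nat \<Rightarrow> 'a \<Rightarrow> 'a) \<Rightarrow> (nat \<Rightarrow> 'a) set" where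
  "inv_lim X g = {x. (\<forall>m. x m \<in> mspace (X m)) \<and> (\<forall>m. x m = g m (x (Suc m)))}"

text \<open>d_Pi(x,y) = max_m d_m(x_m,y_m)/(m+1); the max exists for bounded metrics, so it equals the sup.\<close>
definition inv_lim_dist :: "(nat \<Rightarrow> 'a metric) \<Rightarrow> (nat \<Rightarrow> 'a) \<Rightarrow> (nat \<Rightarrow> 'a) \<Rightarrow> real" where
  "inv_lim_dist X x y = (SUP m. mdist (X m) (x m) (y m) / real (m + 1))"

definition prod_map :: "(nat \<Rightarrow> 'a \<Rightarrow> 'a) \<Rightarrow> (nat \<Rightarrow> 'a) \<Rightarrow> (nat \<Rightarrow> 'a)" where
  "prod_map f x = (\<lambda>m. f m (x m))"

end

theory Submission
  imports Defs
begin

text \<open>Given \<open>\<epsilon>\<close>, take \<open>N\<close> with \<open>1/(N+1) < \<epsilon>/2\<close> and, by the Mittag-Leffler condition, a level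
  \<open>M > N\<close> such that every point of the image of \<open>X\<^sub>M\<close> in \<open>X\<^sub>N\<close> is the \<open>N\<close>-th coordinate of a
  point of the inverse limit. A \<open>\<delta>/(M+1)\<close>-pseudo-orbit of the inverse limit projects to a
  \<open>\<delta>\<close>-pseudo-orbit of \<open>f\<^sub>M\<close>; shadow it by \<open>y\<close> and lift the image of \<open>y\<close> in \<open>X\<^sub>N\<close> to a point \<open>z\<close>
  of the inverse limit. Equivariance and uniform continuity of the bonding maps \<open>X\<^sub>M \<rightarrow> X\<^sub>m\<close>,
  \<open>m \<le> N\<close>, make the orbit of \<open>z\<close> \<open>\<epsilon>/2\<close>-close to the pseudo-orbit in the coordinates \<open>m \<le> N\<close>,
  and the coordinates \<open>m > N\<close> contribute at most \<open>1/(N+1)\<close> to \<open>d\<^sub>\<Pi>\<close>.\<close>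

lemma bond_add: "bond g m (a + b) = bond g m a \<circ> bond g (m + a) b"
  by (induction b) (auto simp: o_assoc add.assoc)

lemma bond_Suc_left: "bond g m (Suc k) = g m \<circ> bond g (Suc m) k"
  using bond_add[of g m 1 k] by simp

lemma bond_diff_comp:
  "m \<le> n \<Longrightarrow> n \<le> k \<Longrightarrow> bond g m (k - m) = bond g m (n - m) \<circ> bond g n (k - n)"
  using bond_add[of g m "n - m" "k - n"] by simp

lemma inv_lim_mspace: "z \<in> inv_lim X g \<Longrightarrow> z m \<in> mspace (X m)"
  unfolding inv_lim_def by blast

lemma inv_lim_bond:
  assumes "z \<in> inv_lim X g" "m \<le> n"
  shows "z m = bond g m (n - m) (z n)"
  using assms(2)
proof (induction n rule: dec_induct)
  case (step n)
  have "z n = g n (z (Suc n))"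
    using assms(1) unfolding inv_lim_def by blast
  with step show ?case
    by (simp add: Suc_diff_le)
qed simp

lemma funpow_prod_map: "(prod_map f ^^ i) z m = (f m ^^ i) (z m)"
  by (induction i) (auto simp: prod_map_def)

lemma funpow_funcset: "u \<in> A \<rightarrow> A \<Longrightarrow> x \<in> A \<Longrightarrow> (u ^^ i) x \<in> A"
  by (induction i) auto

lemma funpow_semiconj:
  assumes "u \<in> A \<rightarrow> A" and "\<And>x. x \<in> A \<Longrightarrow> v (h x) = h (u x)" and "x \<in> A"
  shows "(v ^^ i) (h x) = h ((u ^^ i) x)"
  by (induction i) (simp_all add: assms funpow_funcset)

lemma bond_mspace:
  assumes "\<And>m. g m \<in> mspace (X (Suc m)) \<rightarrow> mspace (X m)"
  shows "y \<in> mspace (X (m + j)) \<Longrightarrow> bond g m j y \<in> mspace (X m)"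
  using assms by (induction j arbitrary: y) auto

lemma uniformly_continuous_map_bond:
  assumes "\<And>m. uniformly_continuous_map (X (Suc m)) (X m) (g m)"
  shows "uniformly_continuous_map (X (m + j)) (X m) (bond g m j)"
proof (induction j)
  case 0
  show ?case
    using uniformly_continuous_map_id[of "X m"] by (simp add: id_def)
next
  case (Suc j)
  show ?case
    using uniformly_continuous_map_compose[OF assms[of "m + j"] Suc] by (simp add: o_def)
qed

lemma bond_commute:
  assumes "\<And>m. g m \<in> mspace (X (Suc m)) \<rightarrow> mspace (X m)"
    and "\<And>m x. x \<in> mspace (X (Suc m)) \<Longrightarrow> f m (g m x) = g m (f (Suc m) x)"
  shows "y \<in> mspace (X (m + j)) \<Longrightarrow> f m (bond g m j y) = bond g m j (f (m + j) y)"
proof (induction j arbitrary: y)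
  case (Suc j)
  have "g (m + j) y \<in> mspace (X (m + j))"
    using assms(1) Suc.prems by auto
  then show ?case
    using Suc.IH assms(2) Suc.prems by simp
qed simp

lemma uniformly_equicontinuous_finite:
  assumes "finite I" and "\<And>k. k \<in> I \<Longrightarrow> uniformly_continuous_map M1 (Y k) (h k)" and "\<epsilon> > 0"
  shows "\<exists>\<eta>>0. \<forall>k\<in>I. \<forall>a\<in>mspace M1. \<forall>b\<in>mspace M1.
    mdist M1 a b < \<eta> \<longrightarrow> mdist (Y k) (h k a) (h k b) < \<epsilon>"
proof -
  have "\<forall>\<^sub>F \<eta> in at_right 0. \<forall>a\<in>mspace M1. \<forall>b\<in>mspace M1. mdist M1 a b < \<eta> \<longrightarrow>
      mdist (Y k) (h k a) (h k b) < \<epsilon>" if k: "k \<in> I" for k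
  proof -
    obtain \<eta>0 where "\<eta>0 > 0" and "\<forall>a\<in>mspace M1. \<forall>b\<in>mspace M1. mdist M1 a b < \<eta>0 \<longrightarrow>
        mdist (Y k) (h k a) (h k b) < \<epsilon>"
      using assms(2)[OF k] \<open>\<epsilon> > 0\<close> unfolding uniformly_continuous_map_def by metis
    then show ?thesis
      unfolding eventually_at_right_field by force
  qed
  then have "\<forall>\<^sub>F \<eta> in at_right 0. \<eta> > 0 \<and> (\<forall>k\<in>I. \<forall>a\<in>mspace M1. \<forall>b\<in>mspace M1.
      mdist M1 a b < \<eta> \<longrightarrow> mdist (Y k) (h k a) (h k b) < \<epsilon>)"
    by (intro eventually_conj eventually_at_right_less eventually_ball_finite assms(1)) blast
  then show ?thesis
    by (rule eventually_happens'[OF trivial_limit_at_right_real])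
qed

lemma bonds_uniformly_equicontinuous:
  assumes "\<And>m. uniformly_continuous_map (X (Suc m)) (X m) (g m)" and "N \<le> M" and "e > 0"
  shows "\<exists>\<eta>>0. \<forall>m\<in>{..N}. \<forall>a\<in>mspace (X M). \<forall>b\<in>mspace (X M). mdist (X M) a b < \<eta> \<longrightarrow>
    mdist (X m) (bond g m (M - m) a) (bond g m (M - m) b) < e"
proof (rule uniformly_equicontinuous_finite)
  show "uniformly_continuous_map (X M) (X m) (bond g m (M - m))" if "m \<in> {..N}" for m
    using uniformly_continuous_map_bond[of X g, OF assms(1), of m "M - m"] that assms(2) by simp
qed (use assms(3) in auto)

lemma mdist_le_inv_lim_dist:
  assumes bdd: "\<And>m x y. x \<in> mspace (X m) \<Longrightarrow> y \<in> mspace (X m) \<Longrightarrow> mdist (X m) x y \<le> 1"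
    and p: "\<And>m. p m \<in> mspace (X m)" and q: "\<And>m. q m \<in> mspace (X m)"
  shows "mdist (X m) (p m) (q m) \<le> real (Suc m) * inv_lim_dist X p q"
proof -
  have "bdd_above (range (\<lambda>m. mdist (X m) (p m) (q m) / real (m + 1)))"
  proof (rule bdd_aboveI2)
    fix m
    show "mdist (X m) (p m) (q m) / real (m + 1) \<le> 1"
      using bdd[OF p q, of m] by (simp add: divide_le_eq)
  qed
  then have "mdist (X m) (p m) (q m) / real (Suc m) \<le> inv_lim_dist X p q"
    unfolding inv_lim_dist_def by (rule cSUP_upper2) auto
  then show ?thesis
    by (simp add: divide_le_eq mult.commute)
qed

lemma inv_lim_dist_le:
  assumes bdd: "\<And>m x y. x \<in> mspace (X m) \<Longrightarrow> y \<in> mspace (X m) \<Longrightarrow> mdist (X m) x y \<le> 1"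
    and p: "\<And>m. p m \<in> mspace (X m)" and q: "\<And>m. q m \<in> mspace (X m)"
    and close: "\<And>m. m \<le> N \<Longrightarrow> mdist (X m) (p m) (q m) \<le> e"
    and tail: "inverse (real (Suc N)) \<le> e"
  shows "inv_lim_dist X p q \<le> e"
  unfolding inv_lim_dist_def
proof (rule cSUP_least)
  fix m
  show "mdist (X m) (p m) (q m) / real (m + 1) \<le> e"
  proof (cases "m \<le> N")
    case True
    have "mdist (X m) (p m) (q m) / real (m + 1) \<le> mdist (X m) (p m) (q m)"
      by (simp add: divide_le_eq mult_le_cancel_left1 leD)
    with close[OF True] show ?thesis by linarith
  next
    case False
    have "mdist (X m) (p m) (q m) / real (m + 1) \<le> 1 / real (m + 1)"
      using bdd[OF p q] by (simp add: divide_right_mono)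
    also have "\<dots> \<le> inverse (real (Suc N))"
      using False by (simp add: inverse_eq_divide frac_le)
    finally show ?thesis using tail by linarith
  qed
qed simp

lemma bond_image_invariant:
  assumes "\<And>n. g n ` S (Suc n) = S n"
  shows "bond g m k ` S (m + k) = S m"
proof (induction k)
  case (Suc k)
  have "bond g m (Suc k) ` S (m + Suc k) = bond g m k ` g (m + k) ` S (Suc (m + k))"
    by (simp add: image_comp)
  with Suc assms show ?case
    by simp
qed simp

lemma inv_lim_lift:
  assumes S: "\<And>n. g n ` S (Suc n) = S n" "\<And>n. S n \<subseteq> mspace (X n)" and p: "p \<in> S N"
  shows "\<exists>z\<in>inv_lim X g. z N = p"
proof -
  obtain w where w0: "w 0 = p" and w: "\<And>t. w t \<in> S (N + t) \<and> g (N + t) (w (Suc t)) = w t"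
  proof -
    have "\<exists>w. \<forall>t. (w t \<in> S (N + t) \<and> (t = 0 \<longrightarrow> w t = p)) \<and> g (N + t) (w (Suc t)) = w t"
    proof (rule dependent_nat_choice)
      fix x t assume "x \<in> S (N + t) \<and> (t = 0 \<longrightarrow> x = p)"
      then show "\<exists>y. (y \<in> S (N + Suc t) \<and> (Suc t = 0 \<longrightarrow> y = p)) \<and> g (N + t) y = x"
        using S(1)[of "N + t"] by force
    qed (use p in auto)
    then show ?thesis
      using that by blast
  qed
  \<comment> \<open>with truncated subtraction: \<open>w (m - N)\<close> above \<open>N\<close>, the image of \<open>p\<close> below \<open>N\<close>\<close>
  define z where "z m = bond g m (N - m) (w (m - N))" for m
  have "z m \<in> S m" for m
  proof (cases "N \<le> m")
    case True
    then show ?thesis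
      using w[of "m - N"] by (simp add: z_def)
  next
    case False
    then show ?thesis
      using bond_image_invariant[of g S, OF S(1), of m "N - m"] w[of 0] by (auto simp: z_def)
  qed
  moreover have "z m = g m (z (Suc m))" for m
  proof (cases "N \<le> m")
    case True
    then show ?thesis
      using w[of "m - N"] by (simp add: z_def Suc_diff_le)
  next
    case False
    then have "N - m = Suc (N - Suc m)" and "Suc m - N = 0"
      by auto
    then show ?thesis
      by (simp add: z_def bond_Suc_left del: bond.simps(2))
  qed
  ultimately have "z \<in> inv_lim X g"
    using S(2) unfolding inv_lim_def by blast
  moreover have "z N = p"
    by (simp add: z_def w0)
  ultimately show ?thesis
    by blast
qed

lemma mittag_leffler_lift:
  assumes ml: "mittag_leffler X g" and g: "\<And>m. g m \<in> mspace (X (Suc m)) \<rightarrow> mspace (X m)"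
  obtains K where "\<And>n. n < K n"
    and "\<And>n y. y \<in> mspace (X (K n)) \<Longrightarrow> \<exists>z\<in>inv_lim X g. z n = bond g n (K n - n) y"
proof -
  have "\<exists>k. \<forall>n. n < k n \<and> (\<forall>i\<ge>k n.
      bond g n (Suc (k n) - n) ` mspace (X (Suc (k n))) = bond g n (Suc i - n) ` mspace (X (Suc i)))"
    using ml unfolding mittag_leffler_def by (rule choice)
  then obtain k where k: "\<forall>n. n < k n \<and> (\<forall>i\<ge>k n.
      bond g n (Suc (k n) - n) ` mspace (X (Suc (k n))) = bond g n (Suc i - n) ` mspace (X (Suc i)))" ..
  define S where "S n = bond g n (Suc (k n) - n) ` mspace (X (Suc (k n)))" for n
  have k_gt: "n < k n" for n
    using k by iprover
  have stable: "S n = bond g n (Suc i - n) ` mspace (X (Suc i))" if "k n \<le> i" for n i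
    unfolding S_def using k that by iprover
  have S_inv: "g n ` S (Suc n) = S n" for n
  proof -
    define i where "i = k n + k (Suc n)"
    have "Suc i - n = Suc (Suc i - Suc n)"
      using k_gt[of n] by (simp add: i_def)
    have "S n = bond g n (Suc i - n) ` mspace (X (Suc i))"
      by (rule stable) (simp add: i_def)
    also have "\<dots> = g n ` bond g (Suc n) (Suc i - Suc n) ` mspace (X (Suc i))"
      by (simp only: \<open>Suc i - n = Suc (Suc i - Suc n)\<close> bond_Suc_left image_comp)
    also have "\<dots> = g n ` S (Suc n)"
      by (subst stable[of "Suc n" i]) (simp_all add: i_def)
    finally show ?thesis
      by (rule sym)
  qed
  have S_sub: "S n \<subseteq> mspace (X n)" for n
    using bond_mspace[of g X, OF g, of _ n "Suc (k n) - n"] k_gt[of n] by (auto simp: S_def)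
  show ?thesis
  proof (rule that[of "\<lambda>n. Suc (k n)"])
    show "n < Suc (k n)" for n
      using k_gt[of n] by simp
    fix n y assume "y \<in> mspace (X (Suc (k n)))"
    then have "bond g n (Suc (k n) - n) y \<in> S n"
      by (simp add: S_def)
    then show "\<exists>z\<in>inv_lim X g. z n = bond g n (Suc (k n) - n) y"
      by (rule inv_lim_lift[of g S X, OF S_inv S_sub])
  qed
qed

locale dynamical_inverse_system =
  fixes X :: "nat \<Rightarrow> 'a metric" and f g :: "nat \<Rightarrow> 'a \<Rightarrow> 'a"
  assumes f_mspace: "\<And>m. f m \<in> mspace (X m) \<rightarrow> mspace (X m)"
    and mdist_le_one: "\<And>m x y. x \<in> mspace (X m) \<Longrightarrow> y \<in> mspace (X m) \<Longrightarrow> mdist (X m) x y \<le> 1"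
    and g_uniformly_continuous: "\<And>m. uniformly_continuous_map (X (Suc m)) (X m) (g m)"
    and f_g_commute: "\<And>m x. x \<in> mspace (X (Suc m)) \<Longrightarrow> f m (g m x) = g m (f (Suc m) x)"
    and ml: "mittag_leffler X g"
begin

lemma g_mspace: "g m \<in> mspace (X (Suc m)) \<rightarrow> mspace (X m)"
  using g_uniformly_continuous[of m] unfolding uniformly_continuous_map_def by blast

lemma prod_map_inv_lim:
  assumes z: "z \<in> inv_lim X g"
  shows "prod_map f z \<in> inv_lim X g"
proof -
  have "f m (z m) \<in> mspace (X m)" for m
    using f_mspace inv_lim_mspace[OF z] by blast
  moreover have "f m (z m) = g m (f (Suc m) (z (Suc m)))" for m
  proof -
    have "z m = g m (z (Suc m))"
      using z unfolding inv_lim_def by blast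
    then show ?thesis
      using f_g_commute[OF inv_lim_mspace[OF z]] by simp
  qed
  ultimately show ?thesis
    unfolding inv_lim_def prod_map_def by blast
qed

lemma funpow_prod_map_inv_lim: "z \<in> inv_lim X g \<Longrightarrow> (prod_map f ^^ i) z \<in> inv_lim X g"
  by (induction i) (simp_all add: prod_map_inv_lim)

lemma funpow_bond:
  assumes "m \<le> n" and "y \<in> mspace (X n)"
  shows "(f m ^^ i) (bond g m (n - m) y) = bond g m (n - m) ((f n ^^ i) y)"
proof (rule funpow_semiconj[OF f_mspace _ assms(2)])
  fix x assume "x \<in> mspace (X n)"
  then show "f m (bond g m (n - m) x) = bond g m (n - m) (f n x)"
    using bond_commute[of g X f, OF g_mspace f_g_commute, of x m "n - m"] assms(1) by simp
qed

lemma inv_lim_dist_le_by_level: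
  assumes z: "z \<in> inv_lim X g" and p: "p \<in> inv_lim X g" and "N \<le> M"
    and zN: "z N = bond g N (M - N) w"
    and close: "\<And>m. m \<le> N \<Longrightarrow> mdist (X m) (bond g m (M - m) w) (bond g m (M - m) (p M)) \<le> e"
    and tail: "inverse (real (Suc N)) \<le> e"
  shows "inv_lim_dist X z p \<le> e"
proof (rule inv_lim_dist_le[where p = z and q = p, OF mdist_le_one
      inv_lim_mspace[OF z] inv_lim_mspace[OF p] _ tail])
  fix m assume "m \<le> N"
  then have "z m = bond g m (M - m) w" and "p m = bond g m (M - m) (p M)"
    using inv_lim_bond[OF z \<open>m \<le> N\<close>] inv_lim_bond[OF p, of m M]
      bond_diff_comp[OF \<open>m \<le> N\<close> \<open>N \<le> M\<close>, of g] zN \<open>N \<le> M\<close>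
    by simp_all
  with close[OF \<open>m \<le> N\<close>] show "mdist (X m) (z m) (p m) \<le> e"
    by simp
qed

lemma coordinate_orbit_lift:
  assumes "\<epsilon> > 0"
  obtains M \<eta> where "\<eta> > 0" and "\<And>y. y \<in> mspace (X M) \<Longrightarrow> \<exists>z\<in>inv_lim X g. \<forall>p\<in>inv_lim X g. \<forall>i.
      mdist (X M) ((f M ^^ i) y) (p M) < \<eta> \<longrightarrow> inv_lim_dist X ((prod_map f ^^ i) z) p < \<epsilon>"
proof -
  obtain K where K: "\<And>n. n < K n"
    and lift: "\<And>n y. y \<in> mspace (X (K n)) \<Longrightarrow> \<exists>z\<in>inv_lim X g. z n = bond g n (K n - n) y"
    by (rule mittag_leffler_lift[OF ml g_mspace]) blast
  obtain N where N: "inverse (real (Suc N)) < \<epsilon> / 2"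
    using reals_Archimedean[of "\<epsilon> / 2"] assms by auto
  define M where "M = K N"
  have "N \<le> M"
    using K[of N] by (simp add: M_def)
  have "\<epsilon> / 2 > 0"
    using assms by simp
  with \<open>N \<le> M\<close> obtain \<eta> where "\<eta> > 0" and close: "\<forall>m\<in>{..N}. \<forall>a\<in>mspace (X M). \<forall>b\<in>mspace (X M).
      mdist (X M) a b < \<eta> \<longrightarrow> mdist (X m) (bond g m (M - m) a) (bond g m (M - m) b) < \<epsilon> / 2"
    using bonds_uniformly_equicontinuous[of X g, OF g_uniformly_continuous] by blast
  show ?thesis
  proof (rule that[OF \<open>\<eta> > 0\<close>])
    fix y assume y: "y \<in> mspace (X M)"
    obtain z where z: "z \<in> inv_lim X g" "z N = bond g N (M - N) y"
      using lift[of y N] y unfolding M_def by blast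
    show "\<exists>z\<in>inv_lim X g. \<forall>p\<in>inv_lim X g. \<forall>i.
      mdist (X M) ((f M ^^ i) y) (p M) < \<eta> \<longrightarrow> inv_lim_dist X ((prod_map f ^^ i) z) p < \<epsilon>"
    proof (intro bexI[OF _ z(1)] ballI allI impI)
      fix p i assume p: "p \<in> inv_lim X g" and near: "mdist (X M) ((f M ^^ i) y) (p M) < \<eta>"
      have "(f M ^^ i) y \<in> mspace (X M)"
        using f_mspace y by (rule funpow_funcset)
      have "inv_lim_dist X ((prod_map f ^^ i) z) p \<le> \<epsilon> / 2"
      proof (rule inv_lim_dist_le_by_level[OF funpow_prod_map_inv_lim[OF z(1)] p \<open>N \<le> M\<close>])
        show "(prod_map f ^^ i) z N = bond g N (M - N) ((f M ^^ i) y)"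
          using funpow_bond[OF \<open>N \<le> M\<close> y] by (simp add: funpow_prod_map z(2))
        show "mdist (X m) (bond g m (M - m) ((f M ^^ i) y)) (bond g m (M - m) (p M)) \<le> \<epsilon> / 2"
          if "m \<le> N" for m
          using close[rule_format, of m "(f M ^^ i) y" "p M"] \<open>(f M ^^ i) y \<in> mspace (X M)\<close>
            inv_lim_mspace[OF p] near that by simp
        show "inverse (real (Suc N)) \<le> \<epsilon> / 2"
          using N by simp
      qed
      then show "inv_lim_dist X ((prod_map f ^^ i) z) p < \<epsilon>"
        using assms by linarith
    qed
  qed
qed

lemma pseudo_orbit_coordinate:
  assumes "p \<in> inv_lim X g" and "q \<in> inv_lim X g"
    and "inv_lim_dist X (prod_map f p) q < \<delta> / real (Suc M)"
  shows "mdist (X M) (f M (p M)) (q M) < \<delta>"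
proof -
  have "mdist (X M) (prod_map f p M) (q M) \<le> real (Suc M) * inv_lim_dist X (prod_map f p) q"
    by (rule mdist_le_inv_lim_dist[OF mdist_le_one
          inv_lim_mspace[OF prod_map_inv_lim[OF assms(1)]] inv_lim_mspace[OF assms(2)]])
  also have "\<dots> < \<delta>"
    using assms(3) by (simp add: pos_less_divide_eq mult.commute)
  finally show ?thesis
    by (simp add: prod_map_def)
qed

lemma shadowing_inv_lim:
  assumes "\<And>m. shadowing (mspace (X m)) (mdist (X m)) (f m)"
  shows "shadowing (inv_lim X g) (inv_lim_dist X) (prod_map f)"
  unfolding shadowing_def
proof (intro allI impI)
  fix \<epsilon> :: real assume "\<epsilon> > 0"
  then obtain M \<eta> where "\<eta> > 0" and lift: "\<And>y. y \<in> mspace (X M) \<Longrightarrow>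
      \<exists>z\<in>inv_lim X g. \<forall>p\<in>inv_lim X g. \<forall>i.
        mdist (X M) ((f M ^^ i) y) (p M) < \<eta> \<longrightarrow> inv_lim_dist X ((prod_map f ^^ i) z) p < \<epsilon>"
    by (rule coordinate_orbit_lift) blast
  obtain \<delta> where "\<delta> > 0" and shadow: "\<forall>xs. (\<forall>i. xs i \<in> mspace (X M)) \<and>
      (\<forall>i. mdist (X M) (f M (xs i)) (xs (Suc i)) < \<delta>) \<longrightarrow>
      (\<exists>y\<in>mspace (X M). \<forall>i. mdist (X M) ((f M ^^ i) y) (xs i) < \<eta>)"
    using assms[of M, unfolded shadowing_def, rule_format, OF \<open>\<eta> > 0\<close>] by blast
  show "\<exists>\<delta>>0. \<forall>xs. (\<forall>i. xs i \<in> inv_lim X g) \<and>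
      (\<forall>i. inv_lim_dist X (prod_map f (xs i)) (xs (Suc i)) < \<delta>) \<longrightarrow>
      (\<exists>z\<in>inv_lim X g. \<forall>i. inv_lim_dist X ((prod_map f ^^ i) z) (xs i) < \<epsilon>)"
  proof (intro exI[of _ "\<delta> / real (Suc M)"] conjI allI impI)
    show "\<delta> / real (Suc M) > 0"
      using \<open>\<delta> > 0\<close> by simp
    fix xs assume xs: "(\<forall>i. xs i \<in> inv_lim X g) \<and>
      (\<forall>i. inv_lim_dist X (prod_map f (xs i)) (xs (Suc i)) < \<delta> / real (Suc M))"
    then have "\<forall>i. xs i M \<in> mspace (X M)"
      by (blast intro: inv_lim_mspace)
    moreover have "\<forall>i. mdist (X M) (f M (xs i M)) (xs (Suc i) M) < \<delta>"
      using xs by (simp add: pseudo_orbit_coordinate)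
    ultimately obtain y where y: "y \<in> mspace (X M)"
      and y_close: "\<forall>i. mdist (X M) ((f M ^^ i) y) (xs i M) < \<eta>"
      using shadow[rule_format, of "\<lambda>i. xs i M"] by blast
    obtain z where "z \<in> inv_lim X g" and z: "\<forall>p\<in>inv_lim X g. \<forall>i.
        mdist (X M) ((f M ^^ i) y) (p M) < \<eta> \<longrightarrow> inv_lim_dist X ((prod_map f ^^ i) z) p < \<epsilon>"
      using lift[OF y] by blast
    have "inv_lim_dist X ((prod_map f ^^ i) z) (xs i) < \<epsilon>" for i
      using z[rule_format, of "xs i" i] xs y_close by simp
    with \<open>z \<in> inv_lim X g\<close>
    show "\<exists>z\<in>inv_lim X g. \<forall>i. inv_lim_dist X ((prod_map f ^^ i) z) (xs i) < \<epsilon>"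
      by blast
  qed
qed

lemma finite_shadowing_inv_lim:
  assumes "\<And>m. finite_shadowing (mspace (X m)) (mdist (X m)) (f m)"
  shows "finite_shadowing (inv_lim X g) (inv_lim_dist X) (prod_map f)"
  unfolding finite_shadowing_def
proof (intro allI impI)
  fix \<epsilon> :: real assume "\<epsilon> > 0"
  then obtain M \<eta> where "\<eta> > 0" and lift: "\<And>y. y \<in> mspace (X M) \<Longrightarrow>
      \<exists>z\<in>inv_lim X g. \<forall>p\<in>inv_lim X g. \<forall>i.
        mdist (X M) ((f M ^^ i) y) (p M) < \<eta> \<longrightarrow> inv_lim_dist X ((prod_map f ^^ i) z) p < \<epsilon>"
    by (rule coordinate_orbit_lift) blast
  obtain \<delta> where "\<delta> > 0" and shadow: "\<forall>n xs. (\<forall>i\<le>n. xs i \<in> mspace (X M)) \<and>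
      (\<forall>i<n. mdist (X M) (f M (xs i)) (xs (Suc i)) < \<delta>) \<longrightarrow>
      (\<exists>y\<in>mspace (X M). \<forall>i\<le>n. mdist (X M) ((f M ^^ i) y) (xs i) < \<eta>)"
    using assms[of M, unfolded finite_shadowing_def, rule_format, OF \<open>\<eta> > 0\<close>] by blast
  show "\<exists>\<delta>>0. \<forall>n xs. (\<forall>i\<le>n. xs i \<in> inv_lim X g) \<and>
      (\<forall>i<n. inv_lim_dist X (prod_map f (xs i)) (xs (Suc i)) < \<delta>) \<longrightarrow>
      (\<exists>z\<in>inv_lim X g. \<forall>i\<le>n. inv_lim_dist X ((prod_map f ^^ i) z) (xs i) < \<epsilon>)"
  proof (intro exI[of _ "\<delta> / real (Suc M)"] conjI allI impI)
    show "\<delta> / real (Suc M) > 0"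
      using \<open>\<delta> > 0\<close> by simp
    fix n xs assume xs: "(\<forall>i\<le>n. xs i \<in> inv_lim X g) \<and>
      (\<forall>i<n. inv_lim_dist X (prod_map f (xs i)) (xs (Suc i)) < \<delta> / real (Suc M))"
    then have "\<forall>i\<le>n. xs i M \<in> mspace (X M)"
      by (blast intro: inv_lim_mspace)
    moreover have "\<forall>i<n. mdist (X M) (f M (xs i M)) (xs (Suc i) M) < \<delta>"
      using xs by (simp add: pseudo_orbit_coordinate)
    ultimately obtain y where y: "y \<in> mspace (X M)"
      and y_close: "\<forall>i\<le>n. mdist (X M) ((f M ^^ i) y) (xs i M) < \<eta>"
      using shadow[rule_format, of n "\<lambda>i. xs i M"] by blast
    obtain z where "z \<in> inv_lim X g" and z: "\<forall>p\<in>inv_lim X g. \<forall>i.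
        mdist (X M) ((f M ^^ i) y) (p M) < \<eta> \<longrightarrow> inv_lim_dist X ((prod_map f ^^ i) z) p < \<epsilon>"
      using lift[OF y] by blast
    have "inv_lim_dist X ((prod_map f ^^ i) z) (xs i) < \<epsilon>" if "i \<le> n" for i
      using z[rule_format, of "xs i" i] xs y_close that by simp
    with \<open>z \<in> inv_lim X g\<close>
    show "\<exists>z\<in>inv_lim X g. \<forall>i\<le>n. inv_lim_dist X ((prod_map f ^^ i) z) (xs i) < \<epsilon>"
      by blast
  qed
qed

end

theorem theorem4p7:
  fixes X :: "nat \<Rightarrow> 'a metric" and f g :: "nat \<Rightarrow> 'a \<Rightarrow> 'a"
  assumes dyn: "\<And>m. dyn_sys (X m) (f m)"
    and bdd: "\<And>m x y. x \<in> mspace (X m) \<Longrightarrow> y \<in> mspace (X m) \<Longrightarrow> mdist (X m) x y \<le> 1"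
    and ucont: "\<And>m. uniformly_continuous_map (X (Suc m)) (X m) (g m)"
    and comm: "\<And>m x. x \<in> mspace (X (Suc m)) \<Longrightarrow> f m (g m x) = g m (f (Suc m) x)"
    and mlc: "mittag_leffler X g"
  shows "((\<forall>m. shadowing (mspace (X m)) (mdist (X m)) (f m)) \<longrightarrow>
            shadowing (inv_lim X g) (inv_lim_dist X) (prod_map f))
       \<and> ((\<forall>m. finite_shadowing (mspace (X m)) (mdist (X m)) (f m)) \<longrightarrow>
            finite_shadowing (inv_lim X g) (inv_lim_dist X) (prod_map f))"
proof -
  have "f m \<in> mspace (X m) \<rightarrow> mspace (X m)" for m
    using dyn[of m] unfolding dyn_sys_def continuous_map_def by auto
  then interpret dynamical_inverse_system X f g
    using bdd ucont comm mlc by unfold_locales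
  show ?thesis
  proof (intro conjI impI)
    assume shadow: "\<forall>m. shadowing (mspace (X m)) (mdist (X m)) (f m)"
    show "shadowing (inv_lim X g) (inv_lim_dist X) (prod_map f)"
      by (rule shadowing_inv_lim) (rule shadow[rule_format])
  next
    assume shadow: "\<forall>m. finite_shadowing (mspace (X m)) (mdist (X m)) (f m)"
    show "finite_shadowing (inv_lim X g) (inv_lim_dist X) (prod_map f)"
      by (rule finite_shadowing_inv_lim) (rule shadow[rule_format])
  qed
qed

end
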